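(* Let $P\subseteq\mathbb{R}^n$ be a permutation-invariant polytope, $\phi:P\to\mathbb{R}$ a Schur-concave function on $P$, and $\alpha\in\mathbb{R}$. Let $M=\{x\in P\mid$ there is no $u\in P$ with $u\ge_m x$ and $u_\Delta\ne x_\Delta\}$, $S=\{(x,t)\mid\phi(x)\le t\le\alpha,\ x\in P\}$ and $X=\{(x,t)\mid\phi(x)\le t\le\alpha,\ x\in M\}$. Then $\mathrm{conv}(S)=\mathrm{conv}(X)$.
   Context: $P$ is permutation-invariant if $x\in P$ implies $Qx\in P$ for every permutation matrix $Q$. $\phi$ is Schur-concave on $P$ if for all $x,y\in P$, $x\ge_m y$ implies $\phi(x)\le\phi(y)$. $x_{[i]}$ is the $i$-th largest entry; $x\ge_m y$ means $\sum_{i=1}^j x_{[i]}\ge\sum_{i=1}^j y_{[i]}$ for $j<n$ with equality for $j=n$. For $x\in\mathbb{R}^n$, $x_\Delta\in\mathbb{R}^n$ is the vector $(x_{[1]},\dots,x_{[n]})$ (entries sorted nonincreasingly). *)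

theory Defs
  imports "HOL-Analysis.Analysis" "HOL-Library.Multiset"
begin

text \<open>The entries of x sorted nonincreasingly: the list [x_[1], ..., x_[n]],
  i.e. the vector x_Delta written as a list.\<close>
definition sorted_desc :: "real^'n \<Rightarrow> real list" where
  "sorted_desc x = rev (sorted_list_of_multiset (image_mset (\<lambda>i. x $ i) (mset_set (UNIV :: 'n set))))"

text \<open>x_[i] for 1 \<le> i \<le> n\<close>
definition kth_largest :: "real^'n \<Rightarrow> nat \<Rightarrow> real" where
  "kth_largest x i = sorted_desc x ! (i - 1)"

text \<open>We only need
  equality of x_Delta's, which is equality of the sorted lists.\<close>

definition majorizes :: "real^'n \<Rightarrow> real^'n \<Rightarrow> bool" (infix "\<ge>\<^sub>m" 50) where
  "majorizes x y \<longleftrightarrow>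
     (\<forall>j. 1 \<le> j \<and> j < CARD('n) \<longrightarrow> (\<Sum>i=1..j. kth_largest x i) \<ge> (\<Sum>i=1..j. kth_largest y i)) \<and>
     (\<Sum>i=1..CARD('n). kth_largest x i) = (\<Sum>i=1..CARD('n). kth_largest y i)"

definition permutation_invariant :: "(real^'n) set \<Rightarrow> bool" where
  "permutation_invariant P \<longleftrightarrow>
     (\<forall>x\<in>P. \<forall>\<sigma>. \<sigma> permutes (UNIV :: 'n set) \<longrightarrow> (\<chi> i. x $ \<sigma> i) \<in> P)"

definition schur_concave_on :: "(real^'n) set \<Rightarrow> (real^'n \<Rightarrow> real) \<Rightarrow> bool" where
  "schur_concave_on P \<phi> \<longleftrightarrow> (\<forall>x\<in>P. \<forall>y\<in>P. x \<ge>\<^sub>m y \<longrightarrow> \<phi> x \<le> \<phi> y)"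

end

theory Submission
  imports Defs
begin

text \<open>Every point x of the compact set P is majorized by some point u of P that is maximal
  for majorization, and all rearrangements of u lie in P and are again maximal. By Rado's theorem
  x is a convex combination of the rearrangements of u, and Schur-concavity gives
  \<open>\<phi> (\<sigma> u) \<le> \<phi> x \<le> t\<close>, so (x, t) is a convex combination of points (\<sigma> u, t) of X.
  Rado's theorem follows by separation: for every c some rearrangement \<sigma> u satisfies
  \<open>c \<bullet> x \<le> c \<bullet> \<sigma> u\<close>, namely the one sorted in the same order as c, by Abel summation.
  A maximal majorant of x is found by maximizing, over the compact set of majorants of x in P,
  the sum of all partial sums of the decreasingly sorted entries; these partial sums are
  Lipschitz continuous.\<close>

subsection \<open>Sorting the entries of a vector\<close>

definition index_list :: "'n::finite list" where
  "index_list = (SOME xs. distinct xs \<and> set xs = UNIV)"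

lemma index_list: "distinct (index_list::'n::finite list)" "set (index_list::'n list) = UNIV"
  "length (index_list::'n list) = CARD('n)"
proof -
  have "\<exists>xs. distinct xs \<and> set xs = (UNIV::'n set)"
    using finite_distinct_list[of "UNIV::'n set"] by auto
  then have "distinct (index_list::'n list) \<and> set (index_list::'n list) = UNIV"
    unfolding index_list_def by (rule someI_ex)
  then show "distinct (index_list::'n list)" "set (index_list::'n list) = UNIV"
    "length (index_list::'n list) = CARD('n)" by (auto simp: distinct_card[symmetric])
qed

definition desc_indices :: "real^'n \<Rightarrow> 'n list" where
  "desc_indices v = sort_key (\<lambda>i. - (v$i)) index_list"

lemma desc_indices: fixes v :: "real^'n"
  shows "distinct (desc_indices v)" "set (desc_indices v) = UNIV"
    "length (desc_indices v) = CARD('n)"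
  using index_list by (auto simp: desc_indices_def)

lemma desc_indices_nth_mono:
  fixes v :: "real^'n"
  assumes "i \<le> j" "j < CARD('n)"
  shows "v $ (desc_indices v ! j) \<le> v $ (desc_indices v ! i)"
proof -
  have "sorted (map (\<lambda>i. - (v$i)) (desc_indices v))"
    unfolding desc_indices_def by (rule sorted_sort_key)
  then have "map (\<lambda>i. - (v$i)) (desc_indices v) ! i \<le> map (\<lambda>i. - (v$i)) (desc_indices v) ! j"
    using assms desc_indices(3)[of v] by (intro sorted_nth_mono) auto
  then show ?thesis using assms desc_indices(3)[of v] by auto
qed

lemma bij_betw_desc_indices_nth:
  fixes v :: "real^'n"
  shows "bij_betw (\<lambda>k. desc_indices v ! k) {..<CARD('n)} UNIV"
  using desc_indices[of v] by (metis bij_betw_nth)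

lemma sum_desc_indices:
  fixes v :: "real^'n"
  shows "(\<Sum>k<CARD('n). f (desc_indices v ! k)) = sum f UNIV"
  using sum.reindex_bij_betw[OF bij_betw_desc_indices_nth[of v], of f] by simp

lemma sorted_desc_eq_map_desc_indices:
  fixes v :: "real^'n"
  shows "sorted_desc v = map (\<lambda>i. v$i) (desc_indices v)"
proof -
  have mset_UNIV: "mset_set (UNIV::'n set) = mset (index_list::'n list)"
    using index_list mset_set_set by metis
  have "sort (map (\<lambda>i. v$i) index_list) = rev (map (\<lambda>i. v$i) (desc_indices v))"
  proof (rule properties_for_sort)
    show "mset (rev (map (($) v) (desc_indices v))) = mset (map (($) v) index_list)"
      by (simp add: desc_indices_def)
    have "sorted (map (\<lambda>i. - (v$i)) (desc_indices v))"
      unfolding desc_indices_def by (rule sorted_sort_key)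
    then have "sorted_wrt (\<ge>) (map (($) v) (desc_indices v))"
      by (simp add: sorted_wrt_map sorted_map)
    then show "sorted (rev (map (($) v) (desc_indices v)))" by (simp add: sorted_wrt_rev)
  qed
  then show ?thesis
    unfolding sorted_desc_def mset_UNIV by (simp add: mset_map[symmetric] del: mset_map)
qed

lemma sorted_desc_permute:
  fixes u :: "real^'n"
  assumes "\<sigma> permutes (UNIV::'n set)"
  shows "sorted_desc (\<chi> i. u $ \<sigma> i) = sorted_desc u"
proof -
  have "image_mset (($) (\<chi> i. u $ \<sigma> i)) (mset_set (UNIV::'n set))
      = image_mset (($) u) (image_mset \<sigma> (mset_set UNIV))"
    by (simp add: multiset.map_comp comp_def) (rule image_mset_cong, simp)
  also have "image_mset \<sigma> (mset_set UNIV) = mset_set UNIV"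
    using image_mset_mset_set[OF permutes_inj[OF assms]] permutes_image[OF assms] by simp
  finally have "image_mset (($) (\<chi> i. u $ \<sigma> i)) (mset_set (UNIV::'n set))
      = image_mset (($) u) (mset_set UNIV)" .
  then show ?thesis unfolding sorted_desc_def by (simp only:)
qed

subsection \<open>Partial sums of the largest entries\<close>

definition top_sum :: "real^'n \<Rightarrow> nat \<Rightarrow> real" where
  "top_sum v j = (\<Sum>i=1..j. kth_largest v i)"

lemma majorizes_iff_top_sum:
  "x \<ge>\<^sub>m y \<longleftrightarrow>
     (\<forall>j. 1 \<le> j \<and> j < CARD('n) \<longrightarrow> top_sum y j \<le> top_sum x j) \<and>
     top_sum x CARD('n) = top_sum (y::real^'n) CARD('n)"
  unfolding majorizes_def top_sum_def ..

lemma majorizes_refl: "(x::real^'n) \<ge>\<^sub>m x"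
  unfolding majorizes_def by simp

lemma majorizes_trans: "(a::real^'n) \<ge>\<^sub>m b \<Longrightarrow> b \<ge>\<^sub>m c \<Longrightarrow> a \<ge>\<^sub>m c"
  unfolding majorizes_def by (metis order_trans)

lemma top_sum_le_if_majorizes:
  assumes "x \<ge>\<^sub>m y" "j \<le> CARD('n)"
  shows "top_sum (y::real^'n) j \<le> top_sum x j"
  using assms unfolding majorizes_iff_top_sum
  by (cases "j = 0"; cases "j = CARD('n)") (auto simp: top_sum_def)

lemma top_sum_permute:
  assumes "\<sigma> permutes (UNIV::'n set)"
  shows "top_sum (\<chi> i. u $ \<sigma> i) j = top_sum (u::real^'n) j"
  unfolding top_sum_def kth_largest_def sorted_desc_permute[OF assms] ..

lemma majorizes_permute_left:
  assumes "\<sigma> permutes (UNIV::'n set)"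
  shows "(\<chi> i. u $ \<sigma> i) \<ge>\<^sub>m x \<longleftrightarrow> (u::real^'n) \<ge>\<^sub>m x"
  unfolding majorizes_iff_top_sum top_sum_permute[OF assms] ..

lemma majorizes_permute_right:
  assumes "\<sigma> permutes (UNIV::'n set)"
  shows "x \<ge>\<^sub>m (\<chi> i. u $ \<sigma> i) \<longleftrightarrow> x \<ge>\<^sub>m (u::real^'n)"
  unfolding majorizes_iff_top_sum top_sum_permute[OF assms] ..

lemma top_sum_eq_sum_desc_indices:
  fixes v :: "real^'n"
  assumes "j \<le> CARD('n)"
  shows "top_sum v j = (\<Sum>k<j. v $ (desc_indices v ! k))"
  using assms
proof (induction j)
  case (Suc j)
  then show ?case
    using desc_indices(3)[of v]
    by (simp add: top_sum_def kth_largest_def sorted_desc_eq_map_desc_indices)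
qed (simp add: top_sum_def)

lemma kth_largest_eq_top_sum_diff:
  assumes "1 \<le> i"
  shows "kth_largest v i = top_sum v i - top_sum v (i - 1)"
  using assms by (cases i) (auto simp: top_sum_def)

lemma sorted_desc_eqI_top_sum:
  fixes u v :: "real^'n"
  assumes "\<And>j. j \<le> CARD('n) \<Longrightarrow> top_sum u j = top_sum v j"
  shows "sorted_desc u = sorted_desc v"
proof (rule nth_equalityI)
  show "length (sorted_desc u) = length (sorted_desc v)"
    by (simp add: sorted_desc_eq_map_desc_indices desc_indices)
  fix k assume "k < length (sorted_desc u)"
  then have "Suc k \<le> CARD('n)" by (simp add: sorted_desc_eq_map_desc_indices desc_indices)
  then have "kth_largest u (Suc k) = kth_largest v (Suc k)"
    using assms[of "Suc k"] assms[of k] by (simp add: kth_largest_eq_top_sum_diff)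
  then show "sorted_desc u ! k = sorted_desc v ! k" by (simp add: kth_largest_def)
qed

definition top_indices :: "real^'n \<Rightarrow> nat \<Rightarrow> 'n set" where
  "top_indices v j = (\<lambda>k. desc_indices v ! k) ` {..<j}"

lemma
  fixes v :: "real^'n"
  assumes "j \<le> CARD('n)"
  shows card_top_indices: "card (top_indices v j) = j"
    and sum_top_indices: "sum f (top_indices v j) = (\<Sum>k<j. f (desc_indices v ! k))"
proof -
  have inj: "inj_on (\<lambda>k. desc_indices v ! k) {..<j}"
    using desc_indices[of v] assms by (auto simp: inj_on_def nth_eq_iff_index_eq)
  show "card (top_indices v j) = j" unfolding top_indices_def using card_image[OF inj] by simp
  show "sum f (top_indices v j) = (\<Sum>k<j. f (desc_indices v ! k))"
    unfolding top_indices_def using sum.reindex[OF inj, of f] by simp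
qed

lemma sum_top_indices_eq_top_sum:
  fixes v :: "real^'n"
  assumes "j \<le> CARD('n)"
  shows "(\<Sum>i\<in>top_indices v j. v$i) = top_sum v j"
  using sum_top_indices[OF assms, of "\<lambda>i. v$i"] top_sum_eq_sum_desc_indices[OF assms] by simp

text \<open>Exchange argument: every index outside the top j indices carries an entry at most
  the j-th largest one, and every index inside at least that.\<close>

lemma sum_le_top_sum:
  fixes v :: "real^'n"
  assumes "card A = j"
  shows "sum (\<lambda>i. v$i) A \<le> top_sum v j"
proof (cases "j = 0")
  case True
  then show ?thesis using assms by (simp add: top_sum_def)
next
  case False
  have jn: "j \<le> CARD('n)" using assms card_mono[of UNIV A] by auto
  define B where "B = top_indices v j"
  define th where "th = v $ (desc_indices v ! (j - 1))"
  have cB: "card B = j" unfolding B_def by (rule card_top_indices[OF jn])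
  have geB: "th \<le> v$i" if "i \<in> B" for i
    using that jn desc_indices_nth_mono[of _ "j - 1" v]
    unfolding B_def th_def top_indices_def by auto
  have leB: "v$i \<le> th" if "i \<notin> B" for i
  proof -
    obtain k where k: "k < CARD('n)" "i = desc_indices v ! k"
      using desc_indices[of v] by (metis UNIV_I in_set_conv_nth)
    then have "j - 1 \<le> k" using that unfolding B_def top_indices_def by auto
    then show ?thesis unfolding th_def k using desc_indices_nth_mono[of "j - 1" k v] k by auto
  qed
  have c: "card (A - B) = card (B - A)"
    using cB assms by (metis card_Diff_subset_Int finite inf_commute card_Int_Diff
        add_diff_cancel_left')
  have "sum (\<lambda>i. v$i) A = sum (\<lambda>i. v$i) (A \<inter> B) + sum (\<lambda>i. v$i) (A - B)"
    by (metis finite sum.Int_Diff)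
  also have "sum (\<lambda>i. v$i) (A - B) \<le> of_nat (card (A - B)) * th"
    using sum_bounded_above[of "A - B" "\<lambda>i. v$i" th] leB by auto
  also have "of_nat (card (A - B)) * th \<le> sum (\<lambda>i. v$i) (B - A)"
    using sum_bounded_below[of "B - A" th "\<lambda>i. v$i"] geB c by auto
  also have "sum (\<lambda>i. v$i) (A \<inter> B) + sum (\<lambda>i. v$i) (B - A) = sum (\<lambda>i. v$i) B"
    by (metis finite inf_commute sum.Int_Diff)
  finally show ?thesis
    using sum_top_indices_eq_top_sum[OF jn] by (simp add: B_def)
qed

lemma top_sum_le_top_sum_plus_l1_dist:
  fixes u v :: "real^'n"
  assumes "j \<le> CARD('n)"
  shows "top_sum u j \<le> top_sum v j + (\<Sum>i\<in>UNIV. \<bar>u$i - v$i\<bar>)"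
proof -
  let ?T = "top_indices u j"
  have "top_sum u j = sum (\<lambda>i. u$i) ?T"
    using sum_top_indices_eq_top_sum[OF assms] by simp
  also have "\<dots> \<le> sum (\<lambda>i. v$i + \<bar>u$i - v$i\<bar>) ?T" by (rule sum_mono) auto
  also have "\<dots> = sum (\<lambda>i. v$i) ?T + sum (\<lambda>i. \<bar>u$i - v$i\<bar>) ?T" by (simp add: sum.distrib)
  also have "sum (\<lambda>i. v$i) ?T \<le> top_sum v j"
    by (rule sum_le_top_sum) (rule card_top_indices[OF assms])
  also have "sum (\<lambda>i. \<bar>u$i - v$i\<bar>) ?T \<le> (\<Sum>i\<in>UNIV. \<bar>u$i - v$i\<bar>)"
    by (rule sum_mono2) auto
  finally show ?thesis by simp
qed

lemma lipschitz_on_top_sum: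
  assumes "j \<le> CARD('n)"
  shows "(real CARD('n))-lipschitz_on UNIV (\<lambda>v::real^'n. top_sum v j)"
proof (rule lipschitz_onI)
  fix u v :: "real^'n"
  have "(\<Sum>i\<in>UNIV. \<bar>u$i - v$i\<bar>) \<le> (\<Sum>i\<in>(UNIV::'n set). dist u v)"
    by (rule sum_mono) (metis component_le_norm_cart dist_norm vector_minus_component)
  then have "(\<Sum>i\<in>UNIV. \<bar>u$i - v$i\<bar>) \<le> real CARD('n) * dist u v" by simp
  then show "dist (top_sum u j) (top_sum v j) \<le> real CARD('n) * dist u v"
    using top_sum_le_top_sum_plus_l1_dist[OF assms, of u v]
      top_sum_le_top_sum_plus_l1_dist[OF assms, of v u]
    by (simp add: dist_real_def abs_minus_commute abs_le_iff)
qed simp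

lemma continuous_on_top_sum:
  "j \<le> CARD('n) \<Longrightarrow> continuous_on UNIV (\<lambda>v::real^'n. top_sum v j)"
  by (rule lipschitz_on_continuous_on[OF lipschitz_on_top_sum])

lemma closed_majorizing: "closed {u::real^'n. u \<ge>\<^sub>m x}"
proof -
  have "{u::real^'n. u \<ge>\<^sub>m x} =
      (\<Inter>j\<in>{1..<CARD('n)}. {u. top_sum x j \<le> top_sum u j}) \<inter>
      {u. top_sum u CARD('n) = top_sum x CARD('n)}"
    unfolding majorizes_iff_top_sum by auto
  then show ?thesis
    by (simp only:)
      (intro closed_Int closed_INT ballI closed_Collect_le closed_Collect_eq
        continuous_on_const continuous_on_top_sum; simp)
qed

subsection \<open>Maximal elements for majorization\<close>

definition majorization_maximal :: "(real^'n) set \<Rightarrow> real^'n \<Rightarrow> bool" where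
  "majorization_maximal P y \<longleftrightarrow>
     y \<in> P \<and> \<not> (\<exists>u\<in>P. u \<ge>\<^sub>m y \<and> sorted_desc u \<noteq> sorted_desc y)"

lemma sorted_desc_eq_if_majorizes_and_top_sums_le:
  fixes u v :: "real^'n"
  assumes maj: "v \<ge>\<^sub>m u"
    and le: "(\<Sum>j\<le>CARD('n). top_sum v j) \<le> (\<Sum>j\<le>CARD('n). top_sum u j)"
  shows "sorted_desc v = sorted_desc u"
proof (rule sorted_desc_eqI_top_sum)
  have ge: "\<forall>j\<in>{..CARD('n)}. top_sum u j \<le> top_sum v j"
    using top_sum_le_if_majorizes[OF maj] by simp
  then have "(\<Sum>j\<le>CARD('n). top_sum u j) \<le> (\<Sum>j\<le>CARD('n). top_sum v j)"
    by (intro sum_mono) simp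
  then have "(\<Sum>j\<le>CARD('n). top_sum u j) = (\<Sum>j\<le>CARD('n). top_sum v j)"
    using le by (rule antisym)
  then show "top_sum v j = top_sum u j" if "j \<le> CARD('n)" for j
    by (rule sym[OF sum_mono_inv]) (use ge that in auto)
qed

lemma exists_majorization_maximal:
  fixes P :: "(real^'n) set"
  assumes "compact P" "x \<in> P"
  obtains u where "majorization_maximal P u" "u \<ge>\<^sub>m x"
proof -
  define f where "f v = (\<Sum>j\<le>CARD('n). top_sum v j)" for v :: "real^'n"
  define Q where "Q = P \<inter> {u. u \<ge>\<^sub>m x}"
  have "compact Q" unfolding Q_def using assms(1) closed_majorizing by (rule compact_Int_closed)
  moreover have "Q \<noteq> {}" unfolding Q_def using assms(2) majorizes_refl by blast
  moreover have "continuous_on Q f" unfolding f_def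
    by (intro continuous_on_sum continuous_on_subset[OF continuous_on_top_sum]) auto
  ultimately obtain u where u: "u \<in> Q" "\<And>y. y \<in> Q \<Longrightarrow> f y \<le> f u"
    by (metis continuous_attains_sup)
  have "sorted_desc v = sorted_desc u" if "v \<in> P" "v \<ge>\<^sub>m u" for v
  proof (rule sorted_desc_eq_if_majorizes_and_top_sums_le[OF \<open>v \<ge>\<^sub>m u\<close>])
    have "v \<in> Q" using that u(1) majorizes_trans unfolding Q_def by blast
    then show "(\<Sum>j\<le>CARD('n). top_sum v j) \<le> (\<Sum>j\<le>CARD('n). top_sum u j)"
      using u(2) unfolding f_def by blast
  qed
  then show ?thesis using that u(1) unfolding Q_def majorization_maximal_def by blast
qed

lemma majorization_maximal_permute:
  assumes "permutation_invariant P" "majorization_maximal P u" "\<sigma> permutes UNIV"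
  shows "majorization_maximal P (\<chi> i. u $ \<sigma> i)"
proof -
  have "(\<chi> i. u $ \<sigma> i) \<in> P"
    using assms unfolding permutation_invariant_def majorization_maximal_def by blast
  moreover have "sorted_desc v = sorted_desc (\<chi> i. u $ \<sigma> i)"
    if "v \<in> P" "v \<ge>\<^sub>m (\<chi> i. u $ \<sigma> i)" for v
    using assms(2) that
    unfolding majorization_maximal_def majorizes_permute_right[OF assms(3)]
      sorted_desc_permute[OF assms(3)] by blast
  ultimately show ?thesis unfolding majorization_maximal_def by blast
qed

subsection \<open>Rado's theorem\<close>

definition rearrangements :: "real^'n \<Rightarrow> (real^'n) set" where
  "rearrangements u = {(\<chi> i. u $ \<sigma> i) | \<sigma>. \<sigma> permutes (UNIV::'n set)}"

lemma finite_rearrangements: "finite (rearrangements u)"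
  unfolding rearrangements_def using finite_permutations[of UNIV] by simp

lemma sum_mult_eq_by_parts:
  fixes a e :: "nat \<Rightarrow> real"
  shows "(\<Sum>k<Suc m. a k * e k) =
    (\<Sum>k<m. (a k - a (Suc k)) * (\<Sum>i\<le>k. e i)) + a m * (\<Sum>i\<le>m. e i)"
  by (induction m) (simp_all add: algebra_simps)

lemma sum_mult_le_if_partial_sums_le:
  fixes a b d :: "nat \<Rightarrow> real"
  assumes "\<And>k. Suc k < m \<Longrightarrow> a (Suc k) \<le> a k"
    and "\<And>k. Suc k < m \<Longrightarrow> (\<Sum>i\<le>k. b i) \<le> (\<Sum>i\<le>k. d i)"
    and "(\<Sum>i<m. b i) = (\<Sum>i<m. d i)"
  shows "(\<Sum>k<m. a k * b k) \<le> (\<Sum>k<m. a k * d k)"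
proof (cases m)
  case (Suc p)
  define e where "e i = d i - b i" for i
  have "(\<Sum>k<m. a k * d k) - (\<Sum>k<m. a k * b k) = (\<Sum>k<Suc p. a k * e k)"
    unfolding e_def Suc by (simp add: sum_subtractf algebra_simps)
  also have "\<dots> = (\<Sum>k<p. (a k - a (Suc k)) * (\<Sum>i\<le>k. e i)) + a p * (\<Sum>i\<le>p. e i)"
    by (rule sum_mult_eq_by_parts)
  also have "(\<Sum>i\<le>p. e i) = 0"
    using assms(3) unfolding e_def Suc by (simp add: sum_subtractf lessThan_Suc_atMost)
  also have "(\<Sum>k<p. (a k - a (Suc k)) * (\<Sum>i\<le>k. e i)) \<ge> 0"
    using assms(1,2) Suc by (intro sum_nonneg) (simp add: e_def sum_subtractf)
  ultimately show ?thesis by simp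
qed simp

text \<open>The rearrangement of u sorted in the same order as c: the j-th largest entry of u is
  placed at the index of the j-th largest entry of c.\<close>

lemma inner_le_inner_rearrangement:
  fixes x u c :: "real^'n"
  assumes maj: "u \<ge>\<^sub>m x"
  obtains w where "w \<in> rearrangements u" "inner c x \<le> inner c w"
proof -
  let ?n = "CARD('n)" and ?L = "desc_indices c" and ?Lu = "desc_indices u"
  define a where "a k = c $ (?L ! k)" for k
  define b where "b k = x $ (?L ! k)" for k
  define d where "d k = u $ (?Lu ! k)" for k
  define \<sigma> where "\<sigma> = (\<lambda>k. ?Lu ! k) \<circ> inv_into {..<?n} (\<lambda>k. ?L ! k)"
  have bL: "bij_betw (\<lambda>k. ?L ! k) {..<?n} UNIV" by (rule bij_betw_desc_indices_nth)
  have "bij_betw \<sigma> UNIV UNIV"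
    unfolding \<sigma>_def
    using bij_betw_trans[OF bij_betw_inv_into[OF bL] bij_betw_desc_indices_nth] .
  then have perm: "\<sigma> permutes UNIV" by (rule bij_imp_permutes) simp
  have \<sigma>: "\<sigma> (?L ! k) = ?Lu ! k" if "k < ?n" for k
    unfolding \<sigma>_def using bL that by (simp add: bij_betw_def inv_into_f_f)
  have cx: "inner c x = (\<Sum>k<?n. a k * b k)"
    unfolding inner_vec_def a_def b_def using sum_desc_indices[of "\<lambda>i. inner (c$i) (x$i)" c]
    by simp
  have "inner c (\<chi> i. u $ \<sigma> i) = (\<Sum>k<?n. c $ (?L!k) * u $ \<sigma> (?L!k))"
    unfolding inner_vec_def using sum_desc_indices[of "\<lambda>i. inner (c$i) (u $ \<sigma> i)" c] by simp
  also have "\<dots> = (\<Sum>k<?n. a k * d k)"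
    by (rule sum.cong) (auto simp: \<sigma> a_def d_def)
  finally have cw: "inner c (\<chi> i. u $ \<sigma> i) = (\<Sum>k<?n. a k * d k)" .
  have partial_b: "(\<Sum>i<j. b i) \<le> top_sum x j" if "j \<le> ?n" for j
  proof -
    have "(\<Sum>i<j. b i) = (\<Sum>i\<in>top_indices c j. x$i)"
      using sum_top_indices[OF that, of "\<lambda>i. x$i" c] by (simp add: b_def)
    also have "\<dots> \<le> top_sum x j"
      by (rule sum_le_top_sum) (rule card_top_indices[OF that])
    finally show ?thesis .
  qed
  have partial_d: "(\<Sum>i<j. d i) = top_sum u j" if "j \<le> ?n" for j
    using top_sum_eq_sum_desc_indices[OF that] by (simp add: d_def)
  have "inner c x \<le> inner c (\<chi> i. u $ \<sigma> i)"
    unfolding cx cw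
  proof (rule sum_mult_le_if_partial_sums_le)
    show "a (Suc k) \<le> a k" if "Suc k < ?n" for k
      unfolding a_def using desc_indices_nth_mono[of k "Suc k" c] that by auto
    show "(\<Sum>i\<le>k. b i) \<le> (\<Sum>i\<le>k. d i)" if "Suc k < ?n" for k
      using partial_b[of "Suc k"] partial_d[of "Suc k"] that
        top_sum_le_if_majorizes[OF maj, of "Suc k"]
      by (simp add: lessThan_Suc_atMost)
    have "(\<Sum>i<?n. b i) = top_sum x ?n"
      using sum_desc_indices[of "\<lambda>i. x$i" c] sum_desc_indices[of "\<lambda>i. x$i" x]
        top_sum_eq_sum_desc_indices[of ?n x] by (simp add: b_def)
    then show "(\<Sum>i<?n. b i) = (\<Sum>i<?n. d i)"
      using partial_d[of ?n] maj by (simp add: majorizes_iff_top_sum)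
  qed
  moreover have "(\<chi> i. u $ \<sigma> i) \<in> rearrangements u"
    using perm unfolding rearrangements_def by blast
  ultimately show ?thesis using that by blast
qed

lemma majorized_in_convex_hull_rearrangements:
  fixes x u :: "real^'n"
  assumes "u \<ge>\<^sub>m x"
  shows "x \<in> convex hull (rearrangements u)"
proof (rule ccontr)
  assume "x \<notin> convex hull (rearrangements u)"
  moreover have "closed (convex hull (rearrangements u))"
    by (simp add: compact_imp_closed finite_imp_compact_convex_hull finite_rearrangements)
  ultimately obtain a b where ab: "inner a x < b" "\<forall>y\<in>convex hull rearrangements u. inner a y > b"
    using separating_hyperplane_closed_point[OF convex_convex_hull] by blast
  obtain w where w: "w \<in> rearrangements u" "inner (-a) x \<le> inner (-a) w"
    using inner_le_inner_rearrangement[OF assms] .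
  have "inner a w > b" using ab(2) hull_inc[OF w(1)] by blast
  with ab(1) w(2) show False by simp
qed

lemma majorization_maximal_rearrangement:
  assumes "permutation_invariant P" "schur_concave_on P \<phi>" "x \<in> P"
    and "majorization_maximal P u" "u \<ge>\<^sub>m x" "w \<in> rearrangements u"
  shows "majorization_maximal P w" "\<phi> w \<le> \<phi> x"
proof -
  obtain \<sigma> where \<sigma>: "\<sigma> permutes UNIV" "w = (\<chi> i. u $ \<sigma> i)"
    using assms(6) unfolding rearrangements_def by blast
  show max: "majorization_maximal P w"
    unfolding \<sigma>(2) using majorization_maximal_permute[OF assms(1,4) \<sigma>(1)] .
  have "w \<ge>\<^sub>m x" unfolding \<sigma>(2) majorizes_permute_left[OF \<sigma>(1)] by (rule assms(5))
  then show "\<phi> w \<le> \<phi> x"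
    using assms(2,3) max unfolding schur_concave_on_def majorization_maximal_def by blast
qed

theorem mainTheorem12:
  fixes P :: "(real^'n) set" and \<phi> :: "real^'n \<Rightarrow> real" and \<alpha> :: real
  assumes "polytope P"
    and "permutation_invariant P"
    and "schur_concave_on P \<phi>"
  defines "S \<equiv> {(x, t). x \<in> P \<and> \<phi> x \<le> t \<and> t \<le> \<alpha>}"
    and "X \<equiv> {(x, t). x \<in> {y \<in> P. \<not> (\<exists>u\<in>P. u \<ge>\<^sub>m y \<and> sorted_desc u \<noteq> sorted_desc y)} \<and> \<phi> x \<le> t \<and> t \<le> \<alpha>}"
  shows "convex hull S = convex hull X"
proof
  have X: "X = {(x, t). majorization_maximal P x \<and> \<phi> x \<le> t \<and> t \<le> \<alpha>}"
    unfolding X_def majorization_maximal_def by simp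
  show "convex hull X \<subseteq> convex hull S"
    by (rule hull_mono) (auto simp: S_def X_def)
  have "(x, t) \<in> convex hull X" if "x \<in> P" "\<phi> x \<le> t" "t \<le> \<alpha>" for x t
  proof -
    obtain u where u: "majorization_maximal P u" "u \<ge>\<^sub>m x"
      using exists_majorization_maximal[OF polytope_imp_compact[OF assms(1)] \<open>x \<in> P\<close>] .
    have "rearrangements u \<times> {t} \<subseteq> X"
      using majorization_maximal_rearrangement[OF assms(2,3) \<open>x \<in> P\<close> u] that
      by (fastforce simp: X)
    then have "convex hull (rearrangements u \<times> {t}) \<subseteq> convex hull X" by (rule hull_mono)
    moreover have "(x, t) \<in> convex hull (rearrangements u \<times> {t})"
      using majorized_in_convex_hull_rearrangements[OF u(2)] by (simp add: convex_hull_Times)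
    ultimately show ?thesis by blast
  qed
  then show "convex hull S \<subseteq> convex hull X"
    by (intro hull_minimal convex_convex_hull) (auto simp: S_def)
qed

end
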